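(* Let $G=(V,E)$ with weight function $w$ be a Frobenius instance with parameter $k$, with parts $V_1,\dots,V_\ell$ and layer weights $w_1,\dots,w_\ell$. Then $G$ has a closed set $S\subseteq V$ with $w(S)=k$ if and only if $\gcd(w_1,\dots,w_\ell)$ divides $k$.
   Context: For a directed graph $G=(V,E)$, a set $S\subseteq V$ is closed if for every edge $(u,v)\in E$, $u\in S$ implies $v\in S$. $D(v)$ denotes the set of vertices reachable from $v$ by a directed path, including $v$ itself. For a set $S$, $w(S)=\sum_{v\in S}w(v)$. A Frobenius instance with parameter $k\in\mathbb{N}$ is a directed graph $G=(V,E)$ with weight function $w:V\to\mathbb{N}$ and a partition $V=V_1\cup\cdots\cup V_\ell$ satisfying the following four conditions: (P1) there are weights $w_1,\dots,w_\ell$ with $w(v)=w_i$ for all $v\in V_i$ and all $i\in[\ell]$; (P2) every edge $(u,v)\in E$ has $u\in V_i$ and $v\in V_j$ for some $\ell\ge i>j\ge1$; (P3) $|V_i|\ge k$ for all $i\in[\ell]$; (P4) $w(D(v))\le\sqrt{k/2}$ for all $v\in V$. *)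

theory Defs
  imports Complex_Main
begin

definition closed_set :: "'a set \<Rightarrow> ('a \<times> 'a) set \<Rightarrow> 'a set \<Rightarrow> bool" where
  "closed_set V E S \<longleftrightarrow> S \<subseteq> V \<and> (\<forall>u v. (u, v) \<in> E \<longrightarrow> u \<in> S \<longrightarrow> v \<in> S)"

definition reach :: "('a \<times> 'a) set \<Rightarrow> 'a \<Rightarrow> 'a set" where
  "reach E v = {u. (v, u) \<in> E\<^sup>*}"

definition wset :: "('a \<Rightarrow> nat) \<Rightarrow> 'a set \<Rightarrow> nat" where
  "wset w S = (\<Sum>v\<in>S. w v)"

definition frobenius_instance ::
  "'a set \<Rightarrow> ('a \<times> 'a) set \<Rightarrow> ('a \<Rightarrow> nat) \<Rightarrow> nat \<Rightarrow> (nat \<Rightarrow> 'a set) \<Rightarrow> (nat \<Rightarrow> nat) \<Rightarrow> nat \<Rightarrow> bool"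
  where
  "frobenius_instance V E w l P ws k \<longleftrightarrow>
     finite V \<and> E \<subseteq> V \<times> V \<and>
     V = (\<Union>i\<in>{1..l}. P i) \<and>
     (\<forall>i\<in>{1..l}. \<forall>j\<in>{1..l}. i \<noteq> j \<longrightarrow> P i \<inter> P j = {}) \<and>
     (\<forall>i\<in>{1..l}. \<forall>v\<in>P i. w v = ws i) \<and>
     (\<forall>u v. (u, v) \<in> E \<longrightarrow> (\<exists>i\<in>{1..l}. \<exists>j\<in>{1..l}. u \<in> P i \<and> v \<in> P j \<and> i > j)) \<and>
     (\<forall>i\<in>{1..l}. card (P i) \<ge> k) \<and>
     (\<forall>v\<in>V. real (wset w (reach E v)) \<le> sqrt (real k / 2))"

end

theory Submission
  imports Defs "HOL-Number_Theory.Cong"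
begin

text \<open>Every closed set is a union of vertices of the layers, so its weight is a multiple of
  gcd(w_1, ..., w_l). Conversely, let s bound every w(D(v)) with s^2 \<le> k, write g(i) for
  gcd(w_1, ..., w_i), and treat the layers from the top down, keeping a closed set A and the
  remaining demand c = k - w(A). Before layer i is treated, g(i) divides c and c \<ge> s (s - g(i)).
  Choose m with m + g(i) \<le> g(i-1) and m w_i \<equiv> c (mod g(i-1)), and add D(x) for m vertices x of
  V_i outside A; they exist because |V_i| \<ge> k. This adds m w_i plus vertices of lower layers,
  hence a multiple of g(i-1), and at most m s in total, so the invariant passes to layer i - 1.
  If g(i-1) = 0 the lower layers weigh nothing and c / w_i vertices of V_i finish the job; below
  layer 1 the gcd is Gcd {} = 0, which forces c = 0.\<close>

lemma cong_solve_dvd_nat_bounded: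
  fixes a c g :: nat
  assumes g: "0 < g" and dvd_c: "gcd g a dvd c"
  obtains m where "m + gcd g a \<le> g" and "[m * a = c] (mod g)"
proof -
  define d where "d = gcd g a"
  define q where "q = g div d"
  have d: "0 < d" and g_eq: "g = q * d"
    using g by (simp_all add: d_def q_def)
  then have q: "0 < q"
    using g by (cases q) auto
  obtain x where x: "[a * x = c] (mod g)"
    using cong_solve_dvd_nat[of a g c] dvd_c by (auto simp: gcd.commute)
  define m where "m = x mod q"
  have "(a div d) * g = (a div d * d) * q"
    using g_eq by (simp add: ac_simps)
  then have "a * q = (a div d) * g"
    by (simp add: d_def)
  then have "a * x = a * m + (a div d) * (x div q) * g"
    unfolding m_def by (metis mod_div_mult_eq add_mult_distrib2 mult.assoc mult.left_commute)
  then have "[m * a = a * x] (mod g)"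
    by (simp add: cong_def mult.commute)
  then have "[m * a = c] (mod g)"
    using x by (rule cong_trans)
  moreover have "m + d \<le> g"
  proof -
    have "m < q"
      using q by (simp add: m_def)
    moreover have "q + d \<le> q * d + 1"
      using q d by (cases q; cases d) auto
    ultimately show ?thesis
      using g_eq by linarith
  qed
  ultimately show ?thesis
    using that d_def by blast
qed

lemma wset_UN_le:
  assumes "finite X" and "\<And>x. x \<in> X \<Longrightarrow> finite (f x)"
  shows "wset w (\<Union>x\<in>X. f x) \<le> (\<Sum>x\<in>X. wset w (f x))"
  using assms
proof (induction X rule: finite_induct)
  case (insert x X)
  have "wset w (\<Union>y\<in>insert x X. f y) \<le> wset w (f x) + wset w (\<Union>y\<in>X. f y)"
    using insert unfolding wset_def by (simp add: sum_Un_nat)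
  with insert show ?case
    by simp
qed (simp add: wset_def)

lemma reach_subset:
  assumes "E \<subseteq> V \<times> V" and "v \<in> V"
  shows "reach E v \<subseteq> V"
proof
  fix u
  assume "u \<in> reach E v"
  then have "(v, u) \<in> E\<^sup>*"
    by (simp add: reach_def)
  then show "u \<in> V"
    using assms by (induction rule: rtrancl_induct) auto
qed

lemma closed_set_Un_reach:
  assumes "closed_set V E A" and "E \<subseteq> V \<times> V" and "X \<subseteq> V"
  shows "closed_set V E (A \<union> (\<Union>x\<in>X. reach E x))"
  using assms reach_subset[OF assms(2)]
  unfolding closed_set_def reach_def
  by (blast intro: rtrancl_into_rtrancl)

locale layered_digraph =
  fixes V :: "'a set" and E :: "('a \<times> 'a) set" and w :: "'a \<Rightarrow> nat"
    and l :: nat and P :: "nat \<Rightarrow> 'a set" and ws :: "nat \<Rightarrow> nat"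
  assumes finite_V: "finite V"
    and edges_in_V: "E \<subseteq> V \<times> V"
    and V_eq: "V = (\<Union>i\<in>{1..l}. P i)"
    and layers_disjoint: "i \<in> {1..l} \<Longrightarrow> j \<in> {1..l} \<Longrightarrow> i \<noteq> j \<Longrightarrow> P i \<inter> P j = {}"
    and layer_weight: "i \<in> {1..l} \<Longrightarrow> v \<in> P i \<Longrightarrow> w v = ws i"
    and edge_descends: "(u, v) \<in> E \<Longrightarrow> \<exists>i\<in>{1..l}. \<exists>j\<in>{1..l}. u \<in> P i \<and> v \<in> P j \<and> j < i"
begin

lemma layer_subset: "i \<in> {1..l} \<Longrightarrow> P i \<subseteq> V"
  using V_eq by blast

lemma layer_unique:
  assumes "u \<in> P i" "u \<in> P i'" "i \<in> {1..l}" "i' \<in> {1..l}"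
  shows "i = i'"
  using assms layers_disjoint[of i i'] by blast

lemma edge_descends_from:
  assumes "(u, v) \<in> E" and "u \<in> P i" and "i \<in> {1..l}"
  shows "\<exists>j\<in>{1..<i}. v \<in> P j"
proof -
  obtain i' j where "i' \<in> {1..l}" "j \<in> {1..l}" "u \<in> P i'" "v \<in> P j" "j < i'"
    using edge_descends[OF assms(1)] by blast
  moreover have "i' = i"
    using layer_unique[of u i' i] calculation assms(2,3) by blast
  ultimately show ?thesis
    by auto
qed

lemma trancl_descends:
  assumes "(u, v) \<in> E\<^sup>+" and "u \<in> P i" and "i \<in> {1..l}"
  shows "\<exists>j\<in>{1..<i}. v \<in> P j"
  using assms(1)
proof (induction rule: trancl_induct)
  case (base v)
  then show ?case
    using edge_descends_from assms(2,3) by blast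
next
  case (step y z)
  then obtain j where j: "j \<in> {1..<i}" "y \<in> P j"
    by blast
  then have "j \<in> {1..l}"
    using assms(3) by auto
  then obtain j' where "j' \<in> {1..<j}" "z \<in> P j'"
    using edge_descends_from[OF step.hyps(2) j(2)] by blast
  with j show ?case
    by auto
qed

lemma Gcd_dvd_wset:
  assumes "L \<subseteq> (\<Union>j\<in>J. P j)" and "J \<subseteq> {1..l}"
  shows "Gcd (ws ` J) dvd wset w L"
  unfolding wset_def
proof (rule dvd_sum)
  fix v
  assume "v \<in> L"
  then obtain j where "j \<in> J" "v \<in> P j"
    using assms(1) by blast
  then show "Gcd (ws ` J) dvd w v"
    using assms(2) layer_weight by auto
qed

lemma card_layer_le_Diff_add_wset:
  assumes "A \<subseteq> V" and i: "i \<in> {1..l}" and "0 < ws i"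
  shows "card (P i) \<le> card (P i - A) + wset w A"
proof -
  have fin: "finite (P i)"
    using finite_subset[OF layer_subset[OF i] finite_V] .
  have "card (P i \<inter> A) * ws i = wset w (P i \<inter> A)"
    unfolding wset_def using layer_weight[OF i] by simp
  also have "\<dots> \<le> wset w A"
    unfolding wset_def using assms(1) finite_subset[OF _ finite_V] by (intro sum_mono2) auto
  finally have "card (P i \<inter> A) * ws i \<le> wset w A" .
  moreover have "card (P i \<inter> A) \<le> card (P i \<inter> A) * ws i"
    using \<open>0 < ws i\<close> by simp
  ultimately have "card (P i \<inter> A) \<le> wset w A"
    by linarith
  moreover have "card (P i) = card (P i \<inter> A) + card (P i - A)"
    using fin by (rule card_Int_Diff)
  ultimately show ?thesis
    by linarith
qed

end

text \<open>Here s plays the role of sqrt(k/2) in (P4); the argument only needs s^2 \<le> k.\<close>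

locale frobenius_digraph = layered_digraph +
  fixes k s :: nat
  assumes layer_card: "i \<in> {1..l} \<Longrightarrow> k \<le> card (P i)"
    and reach_weight_le: "v \<in> V \<Longrightarrow> wset w (reach E v) \<le> s"
    and square_le: "s * s \<le> k"
begin

lemma Gcd_layer_weights_le:
  assumes "J \<subseteq> {1..l}" and "0 < k" and "0 < Gcd (ws ` J)"
  shows "Gcd (ws ` J) \<le> s"
proof -
  have "\<not> ws ` J \<subseteq> {0}"
    using assms(3) Gcd_0_iff by (metis less_irrefl)
  then obtain j where j: "j \<in> J" "ws j \<noteq> 0"
    by blast
  have j_l: "j \<in> {1..l}"
    using j assms(1) by blast
  then have "P j \<noteq> {}"
    using layer_card[OF j_l] assms(2) by auto
  then obtain v where v: "v \<in> P j"
    by blast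
  have vV: "v \<in> V"
    using v layer_subset[OF j_l] by blast
  have "Gcd (ws ` J) \<le> ws j"
    using j by (intro dvd_imp_le) auto
  also have "ws j = wset w {v}"
    using layer_weight[OF j_l v] by (simp add: wset_def)
  also have "\<dots> \<le> wset w (reach E v)"
    unfolding wset_def using reach_subset[OF edges_in_V vV] finite_V
    by (intro sum_mono2) (auto intro: finite_subset simp: reach_def)
  also have "\<dots> \<le> s"
    using reach_weight_le[OF vV] .
  finally show ?thesis .
qed

lemma closed_set_extend:
  assumes A: "closed_set V E A" and i: "i \<in> {1..l}" and m: "m \<le> card (P i - A)"
  obtains A' r where "closed_set V E A'" and "wset w A' = wset w A + m * ws i + r"
    and "Gcd (ws ` {1..<i}) dvd r" and "wset w A' \<le> wset w A + m * s"
proof -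
  obtain X where X: "X \<subseteq> P i - A" "card X = m"
    using m by (meson obtain_subset_with_card_n)
  define R where "R = (\<Union>x\<in>X. reach E x)"
  define L where "L = R - A - X"
  have XV: "X \<subseteq> V" and AV: "A \<subseteq> V"
    using X layer_subset[OF i] A by (auto simp: closed_set_def)
  have RV: "R \<subseteq> V"
    using reach_subset[OF edges_in_V] XV by (auto simp: R_def)
  have fin: "finite B" if "B \<subseteq> V" for B
    using finite_subset[OF that finite_V] .
  have closed: "closed_set V E (A \<union> R)"
    unfolding R_def using A edges_in_V XV by (rule closed_set_Un_reach)
  have "X \<subseteq> R"
    unfolding R_def reach_def by blast
  then have "A \<union> R = (A \<union> X) \<union> L" and "A \<inter> X = {}" and "(A \<union> X) \<inter> L = {}"
    using X by (auto simp: L_def)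
  moreover have "finite A" "finite X" "finite L"
    using AV XV RV fin by (auto simp: L_def)
  ultimately have weight_split: "wset w (A \<union> R) = wset w A + wset w X + wset w L"
    unfolding wset_def by (simp add: sum.union_disjoint)
  have "wset w X = (\<Sum>v\<in>X. ws i)"
    unfolding wset_def using X layer_weight[OF i] by (intro sum.cong) auto
  then have weight_X: "wset w X = m * ws i"
    using X(2) by simp
  have "L \<subseteq> (\<Union>j\<in>{1..<i}. P j)"
  proof
    fix u
    assume "u \<in> L"
    then obtain x where x: "x \<in> X" "(x, u) \<in> E\<^sup>*" "u \<noteq> x"
      by (auto simp: L_def R_def reach_def)
    then have "(x, u) \<in> E\<^sup>+"
      by (simp add: rtrancl_eq_or_trancl)
    moreover have "x \<in> P i"
      using x X by blast
    ultimately show "u \<in> (\<Union>j\<in>{1..<i}. P j)"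
      using trancl_descends i by blast
  qed
  then have dvd_L: "Gcd (ws ` {1..<i}) dvd wset w L"
    using i by (intro Gcd_dvd_wset) auto
  have "wset w (A \<union> R) \<le> wset w A + wset w R"
    unfolding wset_def using AV RV fin by (simp add: sum_Un_nat)
  also have "wset w R \<le> (\<Sum>x\<in>X. wset w (reach E x))"
    unfolding R_def using XV fin reach_subset[OF edges_in_V] by (intro wset_UN_le) auto
  also have "\<dots> \<le> m * s"
    using sum_bounded_above[of X "\<lambda>x. wset w (reach E x)" s] reach_weight_le XV X(2) by auto
  finally have "wset w (A \<union> R) \<le> wset w A + m * s"
    by simp
  then show ?thesis
    using that[OF closed _ dvd_L] weight_split weight_X by simp
qed

lemma closed_set_finish_top_layer:
  assumes A: "closed_set V E A" and i: "i \<in> {1..l}" and lower: "Gcd (ws ` {1..<i}) = 0"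
    and c: "wset w A + c = k" and dvd: "ws i dvd c"
  shows "\<exists>S. closed_set V E S \<and> wset w S = k"
proof (cases "c = 0")
  case True
  with A c show ?thesis
    by auto
next
  case False
  with dvd have pos: "0 < ws i"
    by (auto intro: gr0I)
  define m where "m = c div ws i"
  have "m \<le> c"
    by (simp add: m_def)
  also have "c \<le> card (P i - A)"
    using card_layer_le_Diff_add_wset[OF _ i pos, of A] A layer_card[OF i] c by (auto simp: closed_set_def)
  finally obtain A' r where A': "closed_set V E A'" and "wset w A' = wset w A + m * ws i + r"
      and "Gcd (ws ` {1..<i}) dvd r"
    by (rule closed_set_extend[OF A i])
  moreover from this(3) have "r = 0"
    by (simp only: lower dvd_0_left_iff)
  moreover have "m * ws i = c"
    using dvd by (simp add: m_def)
  ultimately show ?thesis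
    using A' c by auto
qed

lemma closed_set_reduce_top_layer:
  fixes i :: nat
  defines "g \<equiv> Gcd (ws ` {1..<i})"
  assumes A: "closed_set V E A" and i: "i \<in> {1..l}" and "0 < k" and "0 < g"
    and c: "wset w A + c = k" and dvd: "gcd g (ws i) dvd c"
    and budget: "s * (s - gcd g (ws i)) \<le> c"
  obtains A' c' where "closed_set V E A'" and "wset w A' + c' = k" and "g dvd c'"
    and "s * (s - g) \<le> c'"
proof -
  define d where "d = gcd g (ws i)"
  obtain m where m: "m + d \<le> g" and cong: "[m * ws i = c] (mod g)"
    using cong_solve_dvd_nat_bounded[OF \<open>0 < g\<close> dvd] d_def by blast
  have "{1..<i} \<subseteq> {1..l}"
    using i by auto
  then have g_le: "g \<le> s"
    unfolding g_def using Gcd_layer_weights_le \<open>0 < k\<close> \<open>0 < g\<close>[unfolded g_def] by blast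
  have "(s - g) + m \<le> s - d"
    using m g_le by linarith
  then have "s * ((s - g) + m) \<le> s * (s - d)"
    by (rule mult_le_mono2)
  then have "s * (s - g) + m * s \<le> s * (s - d)"
    by (simp add: add_mult_distrib2 mult.commute)
  with budget have budget': "s * (s - g) + m * s \<le> c"
    by (simp add: d_def)
  have "m \<le> card (P i - A)"
  proof (cases "ws i = 0")
    case True
    then show ?thesis
      using m by (simp add: d_def)
  next
    case False
    have "m \<le> m * s"
      using \<open>0 < g\<close> g_le by simp
    also have "\<dots> \<le> c"
      using budget' by simp
    also have "c \<le> card (P i - A)"
      using card_layer_le_Diff_add_wset[OF _ i, of A] False A layer_card[OF i] c by (simp add: closed_set_def)
    finally show ?thesis .
  qed
  then obtain A' r where A': "closed_set V E A'" and weight: "wset w A' = wset w A + m * ws i + r"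
      and dvd_r: "g dvd r" and bound: "wset w A' \<le> wset w A + m * s"
    by (rule closed_set_extend[OF A i, folded g_def])
  define c' where "c' = c - m * ws i - r"
  have used: "m * ws i + r \<le> m * s"
    using weight bound by linarith
  then have "wset w A' + c' = k"
    using weight budget' c unfolding c'_def by linarith
  moreover have "g dvd c'"
  proof -
    have "m * ws i \<le> c"
      using used budget' by linarith
    with cong have "g dvd c - m * ws i"
      using cong_altdef_nat cong_sym by blast
    then show ?thesis
      unfolding c'_def using dvd_r by (rule dvd_diff_nat)
  qed
  moreover have "s * (s - g) \<le> c'"
    using used budget' unfolding c'_def by linarith
  ultimately show ?thesis
    using that A' by blast
qed

lemma closed_set_completion:
  assumes "0 < k"
  shows "j \<le> l \<Longrightarrow> closed_set V E A \<Longrightarrow> wset w A + c = k \<Longrightarrow> Gcd (ws ` {1..j}) dvd c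
    \<Longrightarrow> s * (s - Gcd (ws ` {1..j})) \<le> c \<Longrightarrow> \<exists>S. closed_set V E S \<and> wset w S = k"
proof (induction j arbitrary: A c)
  case 0
  then show ?case
    by auto
next
  case (Suc j)
  define g where "g = Gcd (ws ` {1..j})"
  have i: "Suc j \<in> {1..l}"
    using Suc.prems(1) by auto
  have g_lower: "Gcd (ws ` {1..<Suc j}) = g"
    by (simp add: g_def atLeastLessThanSuc_atLeastAtMost)
  have "Gcd (ws ` {1..Suc j}) = gcd g (ws (Suc j))"
    by (simp add: g_def atLeastAtMostSuc_conv gcd.commute)
  then have dvd: "gcd g (ws (Suc j)) dvd c" and budget: "s * (s - gcd g (ws (Suc j))) \<le> c"
    using Suc.prems(4,5) by simp_all
  show ?case
  proof (cases "g = 0")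
    case True
    with dvd have "ws (Suc j) dvd c"
      by simp
    with True show ?thesis
      using closed_set_finish_top_layer[OF Suc.prems(2) i _ Suc.prems(3)] g_lower by simp
  next
    case False
    then have "0 < g"
      by simp
    then obtain A' c' where "closed_set V E A'" "wset w A' + c' = k" "g dvd c'" "s * (s - g) \<le> c'"
      by (rule closed_set_reduce_top_layer[where i = "Suc j", unfolded g_lower, OF Suc.prems(2) i assms _ Suc.prems(3) dvd budget])
    then show ?thesis
      using Suc.IH Suc.prems(1) by (simp add: g_def)
  qed
qed

lemma exists_closed_set_of_weight:
  assumes "Gcd (ws ` {1..l}) dvd k"
  shows "\<exists>S. closed_set V E S \<and> wset w S = k"
proof -
  have empty: "closed_set V E {}" "wset w {} = 0"
    by (simp_all add: closed_set_def wset_def)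
  show ?thesis
  proof (cases "k = 0")
    case True
    with empty show ?thesis
      by auto
  next
    case False
    have "s * (s - Gcd (ws ` {1..l})) \<le> s * s"
      by (rule mult_le_mono2) (rule diff_le_self)
    then have "s * (s - Gcd (ws ` {1..l})) \<le> k"
      using square_le by (rule le_trans)
    with False empty assms show ?thesis
      using closed_set_completion[of l "{}" k] by simp
  qed
qed

end

lemma nat_floor_sqrt_half_square_le: "nat \<lfloor>sqrt (real k / 2)\<rfloor> * nat \<lfloor>sqrt (real k / 2)\<rfloor> \<le> k"
proof -
  define s where "s = nat \<lfloor>sqrt (real k / 2)\<rfloor>"
  have "real s \<le> sqrt (real k / 2)"
    unfolding s_def by (rule of_nat_floor) simp
  then have "real s * real s \<le> sqrt (real k / 2) * sqrt (real k / 2)"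
    by (intro mult_mono) auto
  also have "\<dots> \<le> real k"
    by simp
  finally have "real (s * s) \<le> real k"
    by simp
  then show ?thesis
    unfolding s_def[symmetric] by (simp only: of_nat_le_iff)
qed

theorem mainTheorem2:
  fixes V :: "'a set" and E :: "('a \<times> 'a) set" and w :: "'a \<Rightarrow> nat"
    and l :: nat and P :: "nat \<Rightarrow> 'a set" and ws :: "nat \<Rightarrow> nat" and k :: nat
  assumes "frobenius_instance V E w l P ws k"
  shows "(\<exists>S. closed_set V E S \<and> wset w S = k) \<longleftrightarrow> Gcd (ws ` {1..l}) dvd k"
proof -
  interpret frobenius_digraph V E w l P ws k "nat \<lfloor>sqrt (real k / 2)\<rfloor>"
    using assms nat_floor_sqrt_half_square_le
    by unfold_locales (auto simp: frobenius_instance_def intro: le_nat_floor)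
  show ?thesis
  proof
    assume "\<exists>S. closed_set V E S \<and> wset w S = k"
    then obtain S where "closed_set V E S" and "wset w S = k"
      by blast
    then show "Gcd (ws ` {1..l}) dvd k"
      using Gcd_dvd_wset[of S "{1..l}"] V_eq by (auto simp: closed_set_def)
  qed (rule exists_closed_set_of_weight)
qed

end
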